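(* There is a unique function $h$ such that $h\neq\underline{\mathfrak{0}}$ and $h(x)=\underline{\mathfrak{0}}$ for every $x\neq h$. (This function is denoted $\varphi_0$; one has $\varphi_0=\underline{\mathfrak{0}}\circ\underline{\mathfrak{0}}$.)
   Context: Flow is a first-order theory with equality whose only non-logical symbol is a binary function symbol written $f(x)$; all objects are called functions. Axioms: (F1) $\forall f\forall g\big(((f(g)=f\wedge g(f)=g)\vee(f(g)=g\wedge g(f)=f))\Rightarrow f=g\big)$; (F2) $\forall f\,(f(f)=f)$; (F3) there is a (necessarily unique) $\underline{\mathfrak{1}}$ with $\underline{\mathfrak{1}}(x)=x$ for all $x$; (F4) there is a (necessarily unique) $\underline{\mathfrak{0}}$ with $\underline{\mathfrak{0}}(x)=\underline{\mathfrak{0}}$ for all $x$. Definition ($\mathfrak{F}$-composition): given $f,g$, a function $h$ is the composition $f\circ g$ iff (i) $h\neq\underline{\mathfrak{0}}$; (ii) for all $x$ with $x\neq f$, $x\neq g$, $x\neq h$: $h(x)=f(g(x))$; (iii) if $h\neq f$ then $h(f)=\underline{\mathfrak{0}}$; (iv) if $h\neq g$ then $h(g)=\underline{\mathfrak{0}}$; (v) if $g\neq h$, $f\neq h$, $g\neq\underline{\mathfrak{1}}$ and $f\neq\underline{\mathfrak{1}}$, then $f(g(h))=\underline{\mathfrak{0}}$ or $g(h)=\underline{\mathfrak{0}}$. Axiom (F5, $\mathfrak{F}$-Composition): for all $f,g$ there is exactly one $h$ with $h=f\circ g$. *)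

theory Defs
  imports Main
begin

text \<open>A model of Flow: a carrier type 'a with binary operation app, where app f x is f(x).\<close>

definition flow_one :: "('a \<Rightarrow> 'a \<Rightarrow> 'a) \<Rightarrow> 'a" where
  "flow_one app = (THE u. \<forall>x. app u x = x)"

definition flow_zero :: "('a \<Rightarrow> 'a \<Rightarrow> 'a) \<Rightarrow> 'a" where
  "flow_zero app = (THE z. \<forall>x. app z x = z)"

definition flow_comp :: "('a \<Rightarrow> 'a \<Rightarrow> 'a) \<Rightarrow> 'a \<Rightarrow> 'a \<Rightarrow> 'a \<Rightarrow> bool" where
  "flow_comp app f g h \<longleftrightarrow>
     h \<noteq> flow_zero app \<and>
     (\<forall>x. x \<noteq> f \<and> x \<noteq> g \<and> x \<noteq> h \<longrightarrow> app h x = app f (app g x)) \<and>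
     (h \<noteq> f \<longrightarrow> app h f = flow_zero app) \<and>
     (h \<noteq> g \<longrightarrow> app h g = flow_zero app) \<and>
     (g \<noteq> h \<and> f \<noteq> h \<and> g \<noteq> flow_one app \<and> f \<noteq> flow_one app \<longrightarrow>
        app f (app g h) = flow_zero app \<or> app g h = flow_zero app)"

definition flow :: "('a \<Rightarrow> 'a \<Rightarrow> 'a) \<Rightarrow> bool" where
  "flow app \<longleftrightarrow>
     (\<forall>f g. ((app f g = f \<and> app g f = g) \<or> (app f g = g \<and> app g f = f)) \<longrightarrow> f = g) \<and>
     (\<forall>f. app f f = f) \<and>
     (\<exists>u. \<forall>x. app u x = x) \<and>
     (\<exists>z. \<forall>x. app z x = z) \<and>
     (\<forall>f g. \<exists>!h. flow_comp app f g h)"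

end

theory Submission
  imports Defs
begin

text \<open>Since \<open>\<zero>\<close> absorbs every argument, the defining clauses of \<open>\<zero> \<circ> \<zero>\<close> reduce exactly
  to ``\<open>h \<noteq> \<zero>\<close> and \<open>h(x) = \<zero>\<close> for all \<open>x \<noteq> h\<close>''; so existence and uniqueness of such an \<open>h\<close>
  is the composition axiom (F5) for \<open>f = g = \<zero>\<close>.\<close>

lemma flow_zero_absorbs:
  assumes "flow app"
  shows "app (flow_zero app) x = flow_zero app"
proof -
  obtain z where z: "\<forall>x. app z x = z"
    using assms unfolding flow_def by blast
  have "flow_zero app = z"
    unfolding flow_zero_def
  proof (rule the_equality)
    show "\<forall>x. app z x = z" by (rule z)
  next
    fix w assume "\<forall>x. app w x = w"
    then have "app w z = w" and "app z w = z" using z by simp_all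
    then show "w = z" using assms unfolding flow_def by blast
  qed
  with z show ?thesis by simp
qed

lemma flow_comp_zero_zero_iff:
  assumes "flow app"
  shows "flow_comp app (flow_zero app) (flow_zero app) h \<longleftrightarrow>
           h \<noteq> flow_zero app \<and> (\<forall>x. x \<noteq> h \<longrightarrow> app h x = flow_zero app)"
  using flow_zero_absorbs[OF assms] unfolding flow_comp_def by metis

theorem theorem6:
  fixes app :: "'a \<Rightarrow> 'a \<Rightarrow> 'a"
  assumes "flow app"
  shows "(\<exists>!h. h \<noteq> flow_zero app \<and> (\<forall>x. x \<noteq> h \<longrightarrow> app h x = flow_zero app)) \<and>
         (\<forall>h. h \<noteq> flow_zero app \<and> (\<forall>x. x \<noteq> h \<longrightarrow> app h x = flow_zero app)
              \<longrightarrow> flow_comp app (flow_zero app) (flow_zero app) h)"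
proof -
  have "\<exists>!h. flow_comp app (flow_zero app) (flow_zero app) h"
    using assms unfolding flow_def by blast
  then show ?thesis
    unfolding flow_comp_zero_zero_iff[OF assms] by blast
qed

end
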